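(* Let $1\le h\le d-3$, $m\in U$, and let $u=(u_{\alpha,\beta})_{\alpha+\beta\le h}$ be an element of $R_h$ at $m$, with $v^{(k)}:=u_{0,k}=(v^{(k)}_j)_{0\le j\le d-3}$ and $\tilde v^{(k)}:=(v^{(k)}_j)_{0\le j\le d-3-k}$. Then $$v^{(h)}=(-1)^hK^h\,u_{h,0}+\sum_{k=0}^{h-1}(-1)^kK^{k}\,({}_0J)\,\langle M,u\rangle_{k,h-1-k},$$ and $v^{(h)}$ is entirely determined by $\tilde v^{(h)}$ together with the $\tilde v^{(k)}$ for $k<h$.
   Context: Let $d\ge 3$, $U\subset\mathbb{C}^2$ open with coordinates $(x,y)$, and let $M$ be the $(d-1)\times(d-2)$ matrix of holomorphic functions on $U$ defined as follows. Let $F(x,y,p)=\sum_{i=0}^d a_i(x,y)p^{d-i}$, $a_i$ holomorphic, $a_0\equiv1$, with $F=\prod_{i=1}^d(p-p_i(x,y))$, the $p_i$ holomorphic and pairwise distinct at every point. A polynomial $P=\sum_{i=0}^kg_ip^i$ is identified with $(g_0,\dots,g_k)^T$; $M(P)$ is the $(h+k+1)\times(h+1)$ multiplication matrix with $0$-based entry $(i,j)$ equal to $g_{i-j}$ if $0\le i-j\le k$, else $0$. Put $K_F=F'_x+pF'_y$, $H=K_FF''_{pp}-(K_F)'_pF'_p$, $L=K_FF'_p$; take $M(F)$ of size $(3d-3)\times(2d-3)$, $M((F'_p)^2)$ of size $(3d-3)\times(d-1)$, $M(L),M(H)$ of size $(3d-3)\times(d-2)$. For a matrix $X$ with $3d-3$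 rows, $X^+$ (resp. $X^-$) is the submatrix of its first $d$ (resp. last $2d-3$) rows. $N$ is the $(d-2)\times(d-2)$ matrix with only nonzero entries $N_{j,j+1}=j$ ($1\le j\le d-3$, 1-based). $B=M^+((F'_p)^2)-M^+(F)(M^-(F))^{-1}M^-((F'_p)^2)$ (rank $d-1$), $E=(M^+(H)-M^+(L)N)-M^+(F)(M^-(F))^{-1}(M^-(H)-M^-(L)N)$, $T$ a left inverse of $B$, and $M=-TE$. $I_0$ (resp. $I^0$) is the $(d-1)\times(d-2)$ matrix formed by $\mathrm{Id}_{d-2}$ followed by (resp. preceded by) a zero row. $({}_0J)$ is the $(d-2)\times(d-1)$ matrix obtained by adding a column of zeros to the left of $\mathrm{Id}_{d-2}$, and $K:=({}_0J)I_0$ (so $K(w_0,\dots,w_{d-3})=(w_1,\dots,w_{d-3},0)$). $M'_{a,b}=\partial^{a+b}M/\partial x^a\partial y^b$, and for $\alpha+\beta\le h-1$, $\langle M,u\rangle_{\alpha,\beta}:=\sum_{\gamma=0}^\alpha\sum_{\delta=0}^\beta\binom{\alpha}{\gamma}\binom{\beta}{\delta}M'_{\alpha-\gamma,\beta-\delta}(m)u_{\gamma,\delta}$. $R_h$ (formal abelian relations of order $h$): its fiber at $m\in U$ is the set of families $(u_{\alpha,\beta})_{\alpha+\beta\le h}$ of vectors in $\mathbb{C}^{d-2}$ such that $I_0u_{\alpha+1,\beta}+I^0u_{\alpha,\beta+1}=\langle M,u\rangle_{\alpha,\beta}$ for all $\alpha+\beta\le h-1$. *)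

theory Defs
  imports "HOL-Analysis.Analysis"
begin

text \<open>Vectors are functions nat => complex
  (only the components below the stated dimension matter); matrices are functions
  nat => nat => complex with explicitly tracked dimensions (0-based indices).\<close>

type_synonym point = "complex \<times> complex"
type_synonym cvec = "nat \<Rightarrow> complex"
type_synonym cmat = "nat \<Rightarrow> nat \<Rightarrow> complex"

definition holo2 :: "point set \<Rightarrow> (point \<Rightarrow> complex) \<Rightarrow> bool" where
  "holo2 U f \<longleftrightarrow> (\<forall>z\<in>U. \<exists>c1 c2. (f has_derivative (\<lambda>w. c1 * fst w + c2 * snd w)) (at z))"

definition pdx :: "(point \<Rightarrow> complex) \<Rightarrow> point \<Rightarrow> complex" where
  "pdx f z = deriv (\<lambda>t. f (t, snd z)) (fst z)"
definition pdy :: "(point \<Rightarrow> complex) \<Rightarrow> point \<Rightarrow> complex" where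
  "pdy f z = deriv (\<lambda>t. f (fst z, t)) (snd z)"
definition dxy :: "nat \<Rightarrow> nat \<Rightarrow> (point \<Rightarrow> complex) \<Rightarrow> point \<Rightarrow> complex" where
  "dxy a b f = (pdx ^^ a) ((pdy ^^ b) f)"

text \<open>Polynomials in p with coefficients functions of (x,y): P i = coefficient of p^i.\<close>
type_synonym ppoly = "nat \<Rightarrow> point \<Rightarrow> complex"

definition Fpol :: "(nat \<Rightarrow> point \<Rightarrow> complex) \<Rightarrow> nat \<Rightarrow> ppoly" where
  "Fpol a d = (\<lambda>i z. if i \<le> d then a (d - i) z else 0)"
definition pp_dx :: "ppoly \<Rightarrow> ppoly" where "pp_dx P = (\<lambda>i. pdx (P i))"
definition pp_dy :: "ppoly \<Rightarrow> ppoly" where "pp_dy P = (\<lambda>i. pdy (P i))"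
definition pp_dp :: "ppoly \<Rightarrow> ppoly" where
  "pp_dp P = (\<lambda>i z. of_nat (Suc i) * P (Suc i) z)"
definition pp_timesp :: "ppoly \<Rightarrow> ppoly" where
  "pp_timesp P = (\<lambda>i z. if i = 0 then 0 else P (i - 1) z)"
definition pp_add :: "ppoly \<Rightarrow> ppoly \<Rightarrow> ppoly" where
  "pp_add P Q = (\<lambda>i z. P i z + Q i z)"
definition pp_sub :: "ppoly \<Rightarrow> ppoly \<Rightarrow> ppoly" where
  "pp_sub P Q = (\<lambda>i z. P i z - Q i z)"
definition pp_mul :: "ppoly \<Rightarrow> ppoly \<Rightarrow> ppoly" where
  "pp_mul P Q = (\<lambda>i z. \<Sum>j\<le>i. P j z * Q (i - j) z)"

definition KFpol :: "(nat \<Rightarrow> point \<Rightarrow> complex) \<Rightarrow> nat \<Rightarrow> ppoly" where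
  "KFpol a d = pp_add (pp_dx (Fpol a d)) (pp_timesp (pp_dy (Fpol a d)))"
definition Hpol :: "(nat \<Rightarrow> point \<Rightarrow> complex) \<Rightarrow> nat \<Rightarrow> ppoly" where
  "Hpol a d = pp_sub (pp_mul (KFpol a d) (pp_dp (pp_dp (Fpol a d))))
                     (pp_mul (pp_dp (KFpol a d)) (pp_dp (Fpol a d)))"
definition Lpol :: "(nat \<Rightarrow> point \<Rightarrow> complex) \<Rightarrow> nat \<Rightarrow> ppoly" where
  "Lpol a d = pp_mul (KFpol a d) (pp_dp (Fpol a d))"

definition multmat :: "ppoly \<Rightarrow> point \<Rightarrow> nat \<Rightarrow> nat \<Rightarrow> cmat" where
  "multmat P z nr nc = (\<lambda>i j. if i < nr \<and> j < nc \<and> j \<le> i then P (i - j) z else 0)"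

definition mmul :: "nat \<Rightarrow> cmat \<Rightarrow> cmat \<Rightarrow> cmat" where
  "mmul n A B = (\<lambda>i j. \<Sum>k<n. A i k * B k j)"
definition msub :: "cmat \<Rightarrow> cmat \<Rightarrow> cmat" where
  "msub A B = (\<lambda>i j. A i j - B i j)"
definition mtop :: "nat \<Rightarrow> cmat \<Rightarrow> cmat" where
  "mtop r X = (\<lambda>i j. if i < r then X i j else 0)"
definition mbot :: "nat \<Rightarrow> nat \<Rightarrow> cmat \<Rightarrow> cmat" where
  "mbot r s X = (\<lambda>i j. if i < s then X (i + r) j else 0)"
definition minv :: "nat \<Rightarrow> cmat \<Rightarrow> cmat" where
  "minv n A = (THE X. (\<forall>i j. (n \<le> i \<or> n \<le> j) \<longrightarrow> X i j = 0)
     \<and> (\<forall>i<n. \<forall>j<n. (\<Sum>k<n. X i k * A k j) = (if i = j then 1 else 0))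
     \<and> (\<forall>i<n. \<forall>j<n. (\<Sum>k<n. A i k * X k j) = (if i = j then 1 else 0)))"

text \<open>N: (d-2)x(d-2), only nonzero entries N_{j,j+1} = j (1-based, 1 <= j <= d-3).\<close>
definition Nmat :: "nat \<Rightarrow> cmat" where
  "Nmat d = (\<lambda>i j. if j = Suc i \<and> Suc i \<le> d - 3 then of_nat (Suc i) else 0)"

definition Bmat :: "(nat \<Rightarrow> point \<Rightarrow> complex) \<Rightarrow> nat \<Rightarrow> point \<Rightarrow> cmat" where
  "Bmat a d z =
    (let MF = multmat (Fpol a d) z (3*d-3) (2*d-3);
         MP = multmat (pp_mul (pp_dp (Fpol a d)) (pp_dp (Fpol a d))) z (3*d-3) (d-1)
     in msub (mtop d MP)
          (mmul (2*d-3) (mmul (2*d-3) (mtop d MF) (minv (2*d-3) (mbot d (2*d-3) MF)))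
                (mbot d (2*d-3) MP)))"

definition Emat :: "(nat \<Rightarrow> point \<Rightarrow> complex) \<Rightarrow> nat \<Rightarrow> point \<Rightarrow> cmat" where
  "Emat a d z =
    (let MF = multmat (Fpol a d) z (3*d-3) (2*d-3);
         ML = multmat (Lpol a d) z (3*d-3) (d-2);
         MH = multmat (Hpol a d) z (3*d-3) (d-2)
     in msub (msub (mtop d MH) (mmul (d-2) (mtop d ML) (Nmat d)))
          (mmul (2*d-3) (mmul (2*d-3) (mtop d MF) (minv (2*d-3) (mbot d (2*d-3) MF)))
                (msub (mbot d (2*d-3) MH) (mmul (d-2) (mbot d (2*d-3) ML) (Nmat d)))))"

text \<open>M = - T E, a (d-1) x (d-2) matrix, where T z is a ((d-1) x d) left inverse of B z.\<close>
definition Mmat :: "(nat \<Rightarrow> point \<Rightarrow> complex) \<Rightarrow> nat \<Rightarrow> (point \<Rightarrow> cmat) \<Rightarrow> point \<Rightarrow> cmat" where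
  "Mmat a d T z = (\<lambda>i j. if i < d - 1 \<and> j < d - 2
      then - (\<Sum>k<d. T z i k * Emat a d z k j) else 0)"

definition Mder :: "(nat \<Rightarrow> point \<Rightarrow> complex) \<Rightarrow> nat \<Rightarrow> (point \<Rightarrow> cmat) \<Rightarrow> nat \<Rightarrow> nat \<Rightarrow> point \<Rightarrow> cmat" where
  "Mder a d T \<alpha> \<beta> m = (\<lambda>i j. dxy \<alpha> \<beta> (\<lambda>z. Mmat a d T z i j) m)"

text \<open>< M, u >_{alpha,beta} (a vector in C^{d-1}); u alpha beta is the vector u_{alpha,beta} in C^{d-2}.\<close>
definition brk :: "(nat \<Rightarrow> point \<Rightarrow> complex) \<Rightarrow> nat \<Rightarrow> (point \<Rightarrow> cmat) \<Rightarrow> point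
    \<Rightarrow> (nat \<Rightarrow> nat \<Rightarrow> cvec) \<Rightarrow> nat \<Rightarrow> nat \<Rightarrow> cvec" where
  "brk a d T m u \<alpha> \<beta> = (\<lambda>i. \<Sum>\<gamma>\<le>\<alpha>. \<Sum>\<delta>\<le>\<beta>.
      of_nat (\<alpha> choose \<gamma>) * of_nat (\<beta> choose \<delta>) *
      (\<Sum>k<d-2. Mder a d T (\<alpha> - \<gamma>) (\<beta> - \<delta>) m i k * u \<gamma> \<delta> k))"

definition I0low :: "nat \<Rightarrow> cvec \<Rightarrow> cvec" where
  "I0low d w = (\<lambda>i. if i < d - 2 then w i else 0)"
definition I0up :: "nat \<Rightarrow> cvec \<Rightarrow> cvec" where
  "I0up d w = (\<lambda>i. if 1 \<le> i \<and> i \<le> d - 2 then w (i - 1) else 0)"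

definition J0 :: "nat \<Rightarrow> cvec \<Rightarrow> cvec" where
  "J0 d x = (\<lambda>j. if j < d - 2 then x (Suc j) else 0)"
definition Kop :: "nat \<Rightarrow> cvec \<Rightarrow> cvec" where
  "Kop d w = J0 d (I0low d w)"

definition inRh :: "(nat \<Rightarrow> point \<Rightarrow> complex) \<Rightarrow> nat \<Rightarrow> (point \<Rightarrow> cmat) \<Rightarrow> nat \<Rightarrow> point
    \<Rightarrow> (nat \<Rightarrow> nat \<Rightarrow> cvec) \<Rightarrow> bool" where
  "inRh a d T h m u \<longleftrightarrow> (\<forall>\<alpha> \<beta>. \<alpha> + \<beta> + 1 \<le> h \<longrightarrow> (\<forall>i < d - 1.
      I0low d (u (Suc \<alpha>) \<beta>) i + I0up d (u \<alpha> (Suc \<beta>)) i = brk a d T m u \<alpha> \<beta> i))"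

end

theory Submission
  imports Defs
begin

text \<open>Row by row, the relation defining \<open>R\<^sub>h\<close> says: entry 0 of \<open>u\<^sub>\<alpha>\<^sub>+\<^sub>1\<^sub>,\<^sub>\<beta>\<close> is prescribed,
  each further entry of \<open>u\<^sub>\<alpha>\<^sub>+\<^sub>1\<^sub>,\<^sub>\<beta>\<close> is tied to the previous entry of \<open>u\<^sub>\<alpha>\<^sub>,\<^sub>\<beta>\<^sub>+\<^sub>1\<close>, and the last
  entry of \<open>u\<^sub>\<alpha>\<^sub>,\<^sub>\<beta>\<^sub>+\<^sub>1\<close> is prescribed. Hence \<open>u\<^sub>\<alpha>\<^sub>,\<^sub>\<beta>\<^sub>+\<^sub>1 = J\<langle>M,u\<rangle>\<^sub>\<alpha>\<^sub>,\<^sub>\<beta> - K u\<^sub>\<alpha>\<^sub>+\<^sub>1\<^sub>,\<^sub>\<beta>\<close>, and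
  walking this recursion down the antidiagonal from \<open>u\<^sub>0\<^sub>,\<^sub>h\<close> to \<open>u\<^sub>h\<^sub>,\<^sub>0\<close> gives the formula.
  For uniqueness, argue degree by degree: if two solutions agree in total degree \<open>\<le> n\<close>,
  their brackets of degree \<open>n\<close> agree, so the differences \<open>c\<^sub>s\<close> of their components of degree
  \<open>n+1\<close> satisfy the homogeneous relation; thus \<open>c\<^sub>s\<close> is the \<open>s\<close>-fold alternating shift of
  \<open>c\<^sub>0\<close>, and the vanishing last entries of the \<open>c\<^sub>s\<close> kill the high entries of \<open>c\<^sub>0\<close>, whose
  low entries vanish by assumption.\<close>

lemma alternating_shift:
  fixes c :: "nat \<Rightarrow> nat \<Rightarrow> 'a :: comm_ring_1"
  assumes first: "\<And>s. s < N \<Longrightarrow> c (Suc s) 0 = 0"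
    and shift: "\<And>s i. s < N \<Longrightarrow> 0 < i \<Longrightarrow> i < n \<Longrightarrow> c (Suc s) i = - c s (i - 1)"
    and "s \<le> N" "i < n"
  shows "c s i = (if s \<le> i then (-1) ^ s * c 0 (i - s) else 0)"
  using assms(3,4)
proof (induction s arbitrary: i)
  case 0
  then show ?case by simp
next
  case (Suc s)
  show ?case
  proof (cases "i = 0")
    case True
    then show ?thesis using first Suc.prems by simp
  next
    case False
    then have "c (Suc s) i = - c s (i - 1)"
      using shift Suc.prems by simp
    moreover have "c s (i - 1) = (if s \<le> i - 1 then (-1) ^ s * c 0 (i - 1 - s) else 0)"
      using Suc by simp
    moreover have "(Suc s \<le> i) = (s \<le> i - 1)" "i - 1 - s = i - Suc s"
      using False by arith+
    ultimately show ?thesis by simp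
  qed
qed

lemma alternating_shift_vanishes:
  fixes c :: "nat \<Rightarrow> nat \<Rightarrow> 'a :: comm_ring_1"
  assumes first: "\<And>s. s < N \<Longrightarrow> c (Suc s) 0 = 0"
    and shift: "\<And>s i. s < N \<Longrightarrow> 0 < i \<Longrightarrow> i < n \<Longrightarrow> c (Suc s) i = - c s (i - 1)"
    and last: "\<And>s. s < N \<Longrightarrow> c s (n - 1) = 0"
    and init: "\<And>j. j + N < n \<Longrightarrow> c 0 j = 0"
    and "s \<le> N" "i < n"
  shows "c s i = 0"
proof -
  have c0: "c 0 j = 0" if "j < n" for j
  proof (cases "j + N < n")
    case True
    then show ?thesis by (rule init)
  next
    case False
    define t where "t = n - 1 - j"
    have "t < N" "t \<le> n - 1" "n - 1 - t = j"
      using False that unfolding t_def by arith+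
    then have "c t (n - 1) = (-1) ^ t * c 0 j"
      using alternating_shift[where c = c and N = N and n = n and s = t and i = "n - 1",
          OF first shift] that by simp
    then show ?thesis using last[OF \<open>t < N\<close>] left_minus_one_mult_self[of t "c 0 j"] by simp
  qed
  show ?thesis
    using alternating_shift[where c = c, OF first shift assms(5,6)] c0 assms(6) by simp
qed

lemma Kop_cong:
  assumes "\<forall>j<d-2. w j = w' j"
  shows "Kop d w = Kop d w'"
  using assms by (auto simp: Kop_def J0_def I0low_def)

lemma funpow_Kop_cong:
  assumes "\<forall>j<d-2. w j = w' j"
  shows "\<forall>j<d-2. (Kop d ^^ n) w j = (Kop d ^^ n) w' j"
proof (induction n)
  case 0
  then show ?case using assms by simp
next
  case (Suc n)
  then show ?case using Kop_cong[of d "(Kop d ^^ n) w" "(Kop d ^^ n) w'"] by simp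
qed

lemma funpow_Kop_diff:
  "(Kop d ^^ n) (\<lambda>j. w j - w' j) = (\<lambda>j. (Kop d ^^ n) w j - (Kop d ^^ n) w' j)"
proof -
  have "Kop d (\<lambda>j. x j - y j) = (\<lambda>j. Kop d x j - Kop d y j)" for x y
    by (auto simp: Kop_def J0_def I0low_def)
  then show ?thesis by (induction n) simp_all
qed

lemma brk_cong:
  assumes "\<And>\<gamma> \<delta> k. \<gamma> \<le> \<alpha> \<Longrightarrow> \<delta> \<le> \<beta> \<Longrightarrow> k < d - 2 \<Longrightarrow> u \<gamma> \<delta> k = u' \<gamma> \<delta> k"
  shows "brk a d T m u \<alpha> \<beta> = brk a d T m u' \<alpha> \<beta>"
  unfolding brk_def using assms by (intro ext sum.cong refl) auto

lemma inRhD: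
  assumes "inRh a d T h m u" "\<alpha> + \<beta> + 1 \<le> h" "i < d - 1"
  shows "I0low d (u (Suc \<alpha>) \<beta>) i + I0up d (u \<alpha> (Suc \<beta>)) i = brk a d T m u \<alpha> \<beta> i"
  using assms unfolding inRh_def by blast

lemma inRh_first_entry:
  assumes "inRh a d T h m u" "\<alpha> + \<beta> + 1 \<le> h" "3 \<le> d"
  shows "u (Suc \<alpha>) \<beta> 0 = brk a d T m u \<alpha> \<beta> 0"
  using inRhD[OF assms(1,2), of 0] assms(3) by (simp add: I0low_def I0up_def)

lemma inRh_middle_entry:
  assumes "inRh a d T h m u" "\<alpha> + \<beta> + 1 \<le> h" "0 < i" "i < d - 2"
  shows "u (Suc \<alpha>) \<beta> i + u \<alpha> (Suc \<beta>) (i - 1) = brk a d T m u \<alpha> \<beta> i"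
  using inRhD[OF assms(1,2), of i] assms(3,4) by (simp add: I0low_def I0up_def)

lemma inRh_last_entry:
  assumes "inRh a d T h m u" "\<alpha> + \<beta> + 1 \<le> h" "3 \<le> d"
  shows "u \<alpha> (Suc \<beta>) (d - 3) = brk a d T m u \<alpha> \<beta> (d - 2)"
proof -
  have "d - 2 - 1 = d - 3" "Suc 0 \<le> d - 2" "\<not> d - 2 < d - 2"
    using assms(3) by arith+
  then show ?thesis
    using inRhD[OF assms(1,2), of "d - 2"] assms(3) by (simp add: I0low_def I0up_def)
qed

lemma inRh_step:
  assumes "inRh a d T h m u" "\<alpha> + \<beta> + 1 \<le> h" "j < d - 2"
  shows "u \<alpha> (Suc \<beta>) j = J0 d (brk a d T m u \<alpha> \<beta>) j - Kop d (u (Suc \<alpha>) \<beta>) j"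
  using inRhD[OF assms(1,2), of "Suc j"] assms(3)
  by (simp add: J0_def Kop_def I0low_def I0up_def algebra_simps)

lemma inRh_unfold:
  assumes uR: "inRh a d T h m u" and "n \<le> h" "j < d - 2"
  shows "u 0 h j = (-1) ^ n * (Kop d ^^ n) (u n (h - n)) j
      + (\<Sum>k<n. (-1) ^ k * (Kop d ^^ k) (J0 d (brk a d T m u k (h - 1 - k))) j)"
  using assms(2,3)
proof (induction n arbitrary: j)
  case 0
  then show ?case by simp
next
  case (Suc n)
  define \<beta> where "\<beta> = h - Suc n"
  have \<beta>: "h - n = Suc \<beta>" "h - 1 - n = \<beta>" "n + \<beta> + 1 \<le> h"
    using Suc.prems unfolding \<beta>_def by arith+
  let ?b = "\<lambda>k. (Kop d ^^ k) (J0 d (brk a d T m u k (h - 1 - k)))"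
  have "\<forall>j<d-2. u n (h - n) j = J0 d (brk a d T m u n \<beta>) j - Kop d (u (Suc n) \<beta>) j"
    using inRh_step[OF uR \<beta>(3)] \<beta>(1) by simp
  from funpow_Kop_cong[OF this, of n] Suc.prems
  have "(Kop d ^^ n) (u n (h - n)) j = ?b n j - (Kop d ^^ Suc n) (u (Suc n) \<beta>) j"
    using \<beta>(2) by (simp add: funpow_Kop_diff funpow_swap1)
  then have "(-1) ^ n * (Kop d ^^ n) (u n (h - n)) j
      = (-1) ^ Suc n * (Kop d ^^ Suc n) (u (Suc n) \<beta>) j + (-1) ^ n * ?b n j"
    by (simp add: algebra_simps flip: distrib_left)
  with Suc show ?case
    unfolding \<beta>_def by simp
qed

lemma inRh_agree_next_degree:
  assumes uR: "inRh a d T h m u" and uR': "inRh a d T h m u'" and d3: "3 \<le> d"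
    and "Suc n \<le> h"
    and lower: "\<And>\<alpha> \<beta> j. \<alpha> + \<beta> \<le> n \<Longrightarrow> j < d - 2 \<Longrightarrow> u' \<alpha> \<beta> j = u \<alpha> \<beta> j"
    and v_low: "\<And>j. j \<le> d - 3 - Suc n \<Longrightarrow> u' 0 (Suc n) j = u 0 (Suc n) j"
    and "s \<le> Suc n" "i < d - 2"
  shows "u' s (Suc n - s) i = u s (Suc n - s) i"
proof -
  define c where "c s i = u' s (Suc n - s) i - u s (Suc n - s) i" for s i
  have level: "s + (n - s) + 1 \<le> h" "Suc (n - s) = Suc n - s" "Suc n - Suc s = n - s"
    if "s < Suc n" for s
    using that \<open>Suc n \<le> h\<close> by arith+
  have brk_eq: "brk a d T m u' s (n - s) = brk a d T m u s (n - s)" if "s < Suc n" for s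
    by (rule brk_cong) (use lower that in auto)
  have "c s i = 0"
  proof (rule alternating_shift_vanishes[where N = "Suc n" and n = "d - 2"])
    show "c (Suc s) 0 = 0" if "s < Suc n" for s
      using inRh_first_entry[OF uR level(1)[OF that] d3]
        inRh_first_entry[OF uR' level(1)[OF that] d3] brk_eq[OF that]
      unfolding c_def level(3)[OF that] by simp
    show "c (Suc s) i = - c s (i - 1)" if "s < Suc n" "0 < i" "i < d - 2" for s i
      using inRh_middle_entry[OF uR level(1)[OF that(1)] that(2,3)]
        inRh_middle_entry[OF uR' level(1)[OF that(1)] that(2,3)] brk_eq[OF that(1)]
      unfolding c_def level(2,3)[OF that(1)] by (simp add: algebra_simps)
    show "c s (d - 2 - 1) = 0" if "s < Suc n" for s
      using inRh_last_entry[OF uR level(1)[OF that] d3]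
        inRh_last_entry[OF uR' level(1)[OF that] d3] brk_eq[OF that]
      unfolding c_def level(2)[OF that] by (simp add: numeral_3_eq_3)
    show "c 0 j = 0" if "j + Suc n < d - 2" for j
      using v_low that unfolding c_def by simp
  qed (use assms in auto)
  then show ?thesis unfolding c_def by simp
qed

lemma inRh_unique:
  assumes uR: "inRh a d T h m u" and uR': "inRh a d T h m u'" and d3: "3 \<le> d"
    and v_low: "\<forall>k\<le>h. \<forall>j\<le>d - 3 - k. u' 0 k j = u 0 k j"
    and "n \<le> h" "\<alpha> + \<beta> \<le> n" "j < d - 2"
  shows "u' \<alpha> \<beta> j = u \<alpha> \<beta> j"
  using assms(5-7)
proof (induction n arbitrary: \<alpha> \<beta> j)
  case 0
  then show ?case using v_low d3 by auto
next
  case (Suc n)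
  show ?case
  proof (cases "\<alpha> + \<beta> \<le> n")
    case True
    with Suc show ?thesis by simp
  next
    case False
    then have "\<beta> = Suc n - \<alpha>" "\<alpha> \<le> Suc n"
      using Suc.prems by arith+
    then show ?thesis
      using inRh_agree_next_degree[OF uR uR' d3 Suc.prems(1)] Suc v_low by auto
  qed
qed

text \<open>Only the relation defining \<open>R\<^sub>h\<close> enters the proof.\<close>

theorem theorem3:
  fixes d h :: nat and U :: "point set" and a p :: "nat \<Rightarrow> point \<Rightarrow> complex"
    and T :: "point \<Rightarrow> cmat" and m :: point and u :: "nat \<Rightarrow> nat \<Rightarrow> cvec"
  assumes d3: "3 \<le> d"
    and U_open: "open U"
    and a_holo: "\<And>i. i \<le> d \<Longrightarrow> holo2 U (a i)"
    and a0: "\<And>z. z \<in> U \<Longrightarrow> a 0 z = 1"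
    and p_holo: "\<And>i. 1 \<le> i \<Longrightarrow> i \<le> d \<Longrightarrow> holo2 U (p i)"
    and p_dist: "\<And>i j z. 1 \<le> i \<Longrightarrow> i \<le> d \<Longrightarrow> 1 \<le> j \<Longrightarrow> j \<le> d \<Longrightarrow> i \<noteq> j \<Longrightarrow> z \<in> U
                   \<Longrightarrow> p i z \<noteq> p j z"
    and F_fact: "\<And>z t. z \<in> U \<Longrightarrow> (\<Sum>i\<le>d. a i z * t ^ (d - i)) = (\<Prod>i\<in>{1..d}. t - p i z)"
    and T_holo: "\<And>i k. i < d - 1 \<Longrightarrow> k < d \<Longrightarrow> holo2 U (\<lambda>z. T z i k)"
    and T_left_inv: "\<And>z i j. z \<in> U \<Longrightarrow> i < d - 1 \<Longrightarrow> j < d - 1 \<Longrightarrow>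
                       (\<Sum>k<d. T z i k * Bmat a d z k j) = (if i = j then 1 else 0)"
    and h1: "1 \<le> h" and h2: "h \<le> d - 3"
    and mU: "m \<in> U"
    and uR: "inRh a d T h m u"
  shows "(\<forall>j < d - 2. u 0 h j =
            (-1) ^ h * (Kop d ^^ h) (u h 0) j
            + (\<Sum>k<h. (-1) ^ k * (Kop d ^^ k) (J0 d (brk a d T m u k (h - 1 - k))) j))
       \<and> (\<forall>u'. inRh a d T h m u' \<longrightarrow>
            (\<forall>k\<le>h. \<forall>j\<le>d - 3 - k. u' 0 k j = u 0 k j) \<longrightarrow>
            (\<forall>j < d - 2. u' 0 h j = u 0 h j))"
  using inRh_unfold[OF uR, of h] inRh_unique[OF uR _ d3, of _ h 0 h] by auto

end
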